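(* Let $r\ge1$, let $\mathcal{A}:\mathbb{C}^{m\times n}\to\mathbb{C}^p$ be linear with $\delta_{4r}(\mathcal{A})\le0.04$, let $X_0\in\mathbb{C}^{m\times n}$ be arbitrary, let $\nu\in\mathbb{C}^p$ and $b=\mathcal{A}X_0+\nu$, and let $X_{0,r}$ be a best rank-$r$ approximation of $X_0$ in Frobenius norm. Then $b=\mathcal{A}X_{0,r}+\widetilde{\nu}$ where $$\|\widetilde{\nu}\|_2\le1.02\left[\|X_0-X_{0,r}\|_F+\frac1{\sqrt r}\|X_0-X_{0,r}\|_*\right]+\|\nu\|_2.$$
   Context: $\|\cdot\|_2$ is the Euclidean norm, $\|\cdot\|_F$ the Frobenius norm, $\|\cdot\|_*$ the nuclear norm. $\delta_s(\mathcal{A})$ is the smallest $\delta\ge0$ such that $(1-\delta)\|X\|_F^2\le\|\mathcal{A}X\|_2^2\le(1+\delta)\|X\|_F^2$ for all $X$ with $\mathrm{rank}(X)\le s$. *)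

theory Defs
  imports "Jordan_Normal_Form.Schur_Decomposition" "Jordan_Normal_Form.DL_Rank"
begin

definition mrank :: "complex mat \<Rightarrow> nat" where
  "mrank X = vec_space.rank (dim_row X) X"

definition frob_norm :: "complex mat \<Rightarrow> real" where
  "frob_norm X = sqrt (\<Sum>i<dim_row X. \<Sum>j<dim_col X. (cmod (X $$ (i, j)))\<^sup>2)"

definition vnorm :: "complex vec \<Rightarrow> real" where
  "vnorm v = sqrt (\<Sum>i<dim_vec v. (cmod (v $ i))\<^sup>2)"

definition singular_values :: "complex mat \<Rightarrow> real multiset" where
  "singular_values X = image_mset (\<lambda>z. sqrt (Re z)) (proots (char_poly (mat_adjoint X * X)))"

definition nuclear_norm :: "complex mat \<Rightarrow> real" where
  "nuclear_norm X = sum_mset (singular_values X)"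

definition clinear_op :: "nat \<Rightarrow> nat \<Rightarrow> nat \<Rightarrow> (complex mat \<Rightarrow> complex vec) \<Rightarrow> bool" where
  "clinear_op m n p A \<longleftrightarrow>
     (\<forall>X \<in> carrier_mat m n. A X \<in> carrier_vec p) \<and>
     (\<forall>X \<in> carrier_mat m n. \<forall>Y \<in> carrier_mat m n. A (X + Y) = A X + A Y) \<and>
     (\<forall>c. \<forall>X \<in> carrier_mat m n. A (c \<cdot>\<^sub>m X) = c \<cdot>\<^sub>v A X)"

definition rip_const :: "nat \<Rightarrow> nat \<Rightarrow> (complex mat \<Rightarrow> complex vec) \<Rightarrow> nat \<Rightarrow> real" where
  "rip_const m n A s = Inf {\<delta>. \<delta> \<ge> 0 \<and> (\<forall>X \<in> carrier_mat m n. mrank X \<le> s \<longrightarrow>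
       (1 - \<delta>) * (frob_norm X)\<^sup>2 \<le> (vnorm (A X))\<^sup>2 \<and>
       (vnorm (A X))\<^sup>2 \<le> (1 + \<delta>) * (frob_norm X)\<^sup>2)}"

definition best_rank_approx :: "nat \<Rightarrow> nat \<Rightarrow> nat \<Rightarrow> complex mat \<Rightarrow> complex mat \<Rightarrow> bool" where
  "best_rank_approx m n r X Xr \<longleftrightarrow> Xr \<in> carrier_mat m n \<and> mrank Xr \<le> r \<and>
     (\<forall>Y \<in> carrier_mat m n. mrank Y \<le> r \<longrightarrow> frob_norm (X - Xr) \<le> frob_norm (X - Y))"

end

theory Submission
  imports Defs "HOL-Analysis.L2_Norm"
begin

text \<open>Put \<open>E = X0 - X0r\<close>; then \<open>b = A X0r + (A E + \<nu>)\<close> and it suffices to bound \<open>\<Parallel>A E\<Parallel>\<close>.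
  Diagonalizing \<open>E\<^sup>H E\<close> by a unitary \<open>U\<close> makes the columns of \<open>E U\<close> orthogonal, with the
  singular values of \<open>E\<close> as their norms. Sorting these decreasingly and grouping them into
  consecutive runs of \<open>r\<close> splits \<open>E = \<Sum>\<^sub>j E\<^sub>j\<close> with \<open>rank E\<^sub>j \<le> r\<close>, so the restricted isometry
  property gives \<open>\<Parallel>A E\<^sub>j\<Parallel> \<le> 1.02 \<Parallel>E\<^sub>j\<Parallel>\<^sub>F\<close>. Every singular value in a group is at most the
  average of the preceding group, whence \<open>\<Sum>\<^sub>j\<^sub>\<ge>\<^sub>1 \<Parallel>E\<^sub>j\<Parallel>\<^sub>F \<le> \<Parallel>E\<Parallel>\<^sub>* / \<surd>r\<close>, while
  \<open>\<Parallel>E\<^sub>0\<Parallel>\<^sub>F \<le> \<Parallel>E\<Parallel>\<^sub>F\<close>.\<close>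

lemma mat_adjoint_dim [simp]:
  "dim_row (mat_adjoint A) = dim_col A" "dim_col (mat_adjoint A) = dim_row A"
  by (simp_all add: mat_adjoint_def mat_of_rows_def)

lemma mat_adjoint_carrier_mat [simp]: "A \<in> carrier_mat m n \<Longrightarrow> mat_adjoint A \<in> carrier_mat n m"
  unfolding carrier_mat_def by auto

lemma index_mat_adjoint [simp]:
  "i < dim_col A \<Longrightarrow> j < dim_row A \<Longrightarrow> mat_adjoint (A :: complex mat) $$ (i, j) = cnj (A $$ (j, i))"
  by (simp add: mat_adjoint_def mat_of_rows_def)

lemma mat_adjoint_mat_adjoint [simp]: "mat_adjoint (mat_adjoint (A :: complex mat)) = A"
  by (rule eq_matI) simp_all

lemma mat_adjoint_mult:
  assumes "(A :: complex mat) \<in> carrier_mat m k" "B \<in> carrier_mat k n"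
  shows "mat_adjoint (A * B) = mat_adjoint B * mat_adjoint A"
proof (rule eq_matI)
  fix i j assume "i < dim_row (mat_adjoint B * mat_adjoint A)" "j < dim_col (mat_adjoint B * mat_adjoint A)"
  then have i: "i < n" and j: "j < m" using assms by auto
  have "mat_adjoint (A * B) $$ (i, j) = cnj (\<Sum>l<k. A $$ (j, l) * B $$ (l, i))"
    using assms i j by (simp add: scalar_prod_def lessThan_atLeast0)
  also have "\<dots> = (\<Sum>l<k. cnj (B $$ (l, i)) * cnj (A $$ (j, l)))"
    by (simp add: mult.commute)
  also have "\<dots> = (mat_adjoint B * mat_adjoint A) $$ (i, j)"
    using assms i j by (simp add: scalar_prod_def lessThan_atLeast0)
  finally show "mat_adjoint (A * B) $$ (i, j) = (mat_adjoint B * mat_adjoint A) $$ (i, j)" .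
qed (use assms in simp_all)

lemma mat_adjoint_one [simp]: "mat_adjoint (1\<^sub>m n :: complex mat) = 1\<^sub>m n"
  by (rule eq_matI) simp_all

lemma mat_adjoint_four_block_diag:
  assumes "(A :: complex mat) \<in> carrier_mat k k" "B \<in> carrier_mat l l"
  shows "mat_adjoint (four_block_mat A (0\<^sub>m k l) (0\<^sub>m l k) B)
    = four_block_mat (mat_adjoint A) (0\<^sub>m k l) (0\<^sub>m l k) (mat_adjoint B)"
  by (rule eq_matI) (use assms in auto)

lemma four_block_diag_mult:
  assumes "A1 \<in> carrier_mat r1 c1" "A2 \<in> carrier_mat c1 d1"
    "B1 \<in> carrier_mat r2 c2" "B2 \<in> carrier_mat c2 d2"
  shows "four_block_mat A1 (0\<^sub>m r1 c2) (0\<^sub>m r2 c1) B1 * four_block_mat A2 (0\<^sub>m c1 d2) (0\<^sub>m c2 d1) B2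
    = four_block_mat (A1 * A2) (0\<^sub>m r1 d2) (0\<^sub>m r2 d1) (B1 * B2 :: 'a :: comm_ring_1 mat)"
  using assms by (subst mult_four_block_mat) auto

text \<open>Instances of the product rules with all dimensions equal to \<open>n\<close>: with the dimensions fixed,
  the simplifier can discharge their carrier premises and reassociate products of square matrices.\<close>

lemmas square_mat_simps = assoc_mult_mat[of _ n n _ n _ n] mult_carrier_mat[of _ n n _ n]
  mat_adjoint_carrier_mat[of _ n n] for n

definition unitary_mat :: "nat \<Rightarrow> complex mat \<Rightarrow> bool" where
  "unitary_mat n U \<longleftrightarrow> U \<in> carrier_mat n n \<and> mat_adjoint U * U = 1\<^sub>m n \<and> U * mat_adjoint U = 1\<^sub>m n"

lemma unitary_matI:
  assumes "U \<in> carrier_mat n n" "mat_adjoint U * U = 1\<^sub>m n"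
  shows "unitary_mat n U"
  using assms mat_mult_left_right_inverse[of "mat_adjoint U" n U] unfolding unitary_mat_def by simp

lemma unitary_mat_mult:
  assumes "unitary_mat n U" "unitary_mat n V"
  shows "unitary_mat n (U * V)"
proof (rule unitary_matI)
  have U: "U \<in> carrier_mat n n" and UU: "mat_adjoint U * U = 1\<^sub>m n"
    and V: "V \<in> carrier_mat n n" and VV: "mat_adjoint V * V = 1\<^sub>m n"
    using assms unfolding unitary_mat_def by auto
  show "U * V \<in> carrier_mat n n" using U V by simp
  have "mat_adjoint (U * V) * (U * V) = mat_adjoint V * (mat_adjoint U * U) * V"
    using U V by (simp add: mat_adjoint_mult square_mat_simps[where n = n])
  also have "\<dots> = 1\<^sub>m n" unfolding UU using V VV by simp
  finally show "mat_adjoint (U * V) * (U * V) = 1\<^sub>m n" .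
qed

lemma unitary_mat_four_block:
  assumes "unitary_mat k U"
  shows "unitary_mat (Suc k) (four_block_mat (1\<^sub>m 1) (0\<^sub>m 1 k) (0\<^sub>m k 1) U)"
proof (rule unitary_matI)
  have U: "U \<in> carrier_mat k k" and UU: "mat_adjoint U * U = 1\<^sub>m k"
    using assms unfolding unitary_mat_def by auto
  show "four_block_mat (1\<^sub>m 1) (0\<^sub>m 1 k) (0\<^sub>m k 1) U \<in> carrier_mat (Suc k) (Suc k)"
    using four_block_carrier_mat[of "1\<^sub>m 1" 1 1 U k k] U by simp
  have adj: "mat_adjoint (four_block_mat (1\<^sub>m 1) (0\<^sub>m 1 k) (0\<^sub>m k 1) U)
      = four_block_mat (1\<^sub>m 1) (0\<^sub>m 1 k) (0\<^sub>m k 1) (mat_adjoint U)"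
    using mat_adjoint_four_block_diag[OF one_carrier_mat U] by simp
  show "mat_adjoint (four_block_mat (1\<^sub>m 1) (0\<^sub>m 1 k) (0\<^sub>m k 1) U)
      * four_block_mat (1\<^sub>m 1) (0\<^sub>m 1 k) (0\<^sub>m k 1) U = 1\<^sub>m (Suc k)"
    unfolding adj four_block_diag_mult[OF one_carrier_mat one_carrier_mat
        mat_adjoint_carrier_mat[OF U] U] UU
    by (rule eq_matI) auto
qed

lemma four_block_conj_diag:
  fixes V :: "complex mat"
  assumes "a \<in> carrier_mat 1 1" "V \<in> carrier_mat k k" "D \<in> carrier_mat k k"
  shows "four_block_mat (1\<^sub>m 1) (0\<^sub>m 1 k) (0\<^sub>m k 1) V * four_block_mat a (0\<^sub>m 1 k) (0\<^sub>m k 1) D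
      * mat_adjoint (four_block_mat (1\<^sub>m 1) (0\<^sub>m 1 k) (0\<^sub>m k 1) V)
    = four_block_mat a (0\<^sub>m 1 k) (0\<^sub>m k 1) (V * D * mat_adjoint V)"
proof -
  have "four_block_mat (1\<^sub>m 1) (0\<^sub>m 1 k) (0\<^sub>m k 1) V * four_block_mat a (0\<^sub>m 1 k) (0\<^sub>m k 1) D
      * mat_adjoint (four_block_mat (1\<^sub>m 1) (0\<^sub>m 1 k) (0\<^sub>m k 1) V)
    = four_block_mat (1\<^sub>m 1 * a * 1\<^sub>m 1) (0\<^sub>m 1 k) (0\<^sub>m k 1) (V * D * mat_adjoint V)"
    unfolding mat_adjoint_four_block_diag[OF one_carrier_mat assms(2)] mat_adjoint_one
    by (simp only: four_block_diag_mult[OF one_carrier_mat assms]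
        four_block_diag_mult[OF mult_carrier_mat[OF one_carrier_mat assms(1)] one_carrier_mat
          mult_carrier_mat[OF assms(2,3)] mat_adjoint_carrier_mat[OF assms(2)]])
  then show ?thesis using assms(1) by simp
qed

lemma unitary_mat_conj_cancel:
  assumes "unitary_mat n U" "A \<in> carrier_mat n n"
  shows "U * (mat_adjoint U * A * U) * mat_adjoint U = A"
proof -
  have U: "U \<in> carrier_mat n n" and UU: "U * mat_adjoint U = 1\<^sub>m n"
    using assms(1) unfolding unitary_mat_def by auto
  have "U * (mat_adjoint U * A * U) * mat_adjoint U = (U * mat_adjoint U) * A * (U * mat_adjoint U)"
    using U assms(2) by (simp add: square_mat_simps[where n = n])
  also have "\<dots> = A" unfolding UU using assms(2) by simp
  finally show ?thesis .
qed

lemma vnorm_L2_set: "vnorm v = L2_set (\<lambda>i. cmod (v $ i)) {..<dim_vec v}"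
  unfolding vnorm_def L2_set_def ..

lemma vnorm_nonneg: "0 \<le> vnorm v"
  by (simp add: vnorm_L2_set)

lemma vnorm_zero [simp]: "vnorm (0\<^sub>v n) = 0"
  by (simp add: vnorm_def)

lemma vnorm_smult: "vnorm (c \<cdot>\<^sub>v v) = cmod c * vnorm v"
  unfolding vnorm_def
  by (simp add: norm_mult power_mult_distrib sum_distrib_left[symmetric] real_sqrt_mult)

lemma vnorm_pos:
  assumes "v \<in> carrier_vec n" "v \<noteq> 0\<^sub>v n"
  shows "0 < vnorm v"
proof -
  obtain i where i: "i < n" "v $ i \<noteq> 0"
    using assms by (metis carrier_vecD eq_vecI index_zero_vec)
  have "0 < cmod (v $ i)" using i by simp
  also have "\<dots> \<le> vnorm v"
    unfolding vnorm_L2_set using i assms by (intro member_le_L2_set) auto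
  finally show ?thesis .
qed

lemma vnorm_normalize:
  assumes "v \<in> carrier_vec n" "v \<noteq> 0\<^sub>v n"
  shows "vnorm (complex_of_real (1 / vnorm v) \<cdot>\<^sub>v v) = 1"
  using vnorm_pos[OF assms] by (simp add: vnorm_smult norm_divide)

lemma cscalar_prod_self: "v \<bullet>c v = complex_of_real ((vnorm v)\<^sup>2)"
  unfolding vnorm_def scalar_prod_def
  by (simp add: lessThan_atLeast0 of_real_sum complex_norm_square[symmetric] sum_nonneg)

lemma cscalar_prod_smult:
  assumes "x \<in> carrier_vec n" "y \<in> carrier_vec n"
  shows "(a \<cdot>\<^sub>v x) \<bullet>c (b \<cdot>\<^sub>v y) = a * cnj b * (x \<bullet>c (y :: complex vec))"
  using assms unfolding scalar_prod_def
  by (simp add: sum_distrib_left lessThan_atLeast0 mult.assoc mult.left_commute)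

lemma vnorm_triangle:
  assumes "u \<in> carrier_vec p" "v \<in> carrier_vec p"
  shows "vnorm (u + v) \<le> vnorm u + vnorm v"
proof -
  have "vnorm (u + v) \<le> L2_set (\<lambda>i. cmod (u $ i) + cmod (v $ i)) {..<p}"
    using assms unfolding vnorm_L2_set by (auto intro!: L2_set_mono norm_triangle_ineq)
  also have "\<dots> \<le> vnorm u + vnorm v"
    using assms unfolding vnorm_L2_set by (simp add: L2_set_triangle_ineq)
  finally show ?thesis .
qed

section \<open>The spectral theorem for Hermitian matrices\<close>

lemma unitary_mat_of_cols:
  assumes ws: "set ws \<subseteq> carrier_vec n" "length ws = n"
    and orthonormal: "\<And>i j. i < n \<Longrightarrow> j < n \<Longrightarrow> ws ! i \<bullet>c ws ! j = (if i = j then 1 else 0)"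
  shows "unitary_mat n (mat_of_cols n ws)"
proof (rule unitary_matI)
  show "mat_of_cols n ws \<in> carrier_mat n n" using mat_of_cols_carrier(1)[of n ws] ws(2) by simp
  have ws_carrier: "ws ! i \<in> carrier_vec n" if "i < n" for i
    using ws that nth_mem by blast
  show "mat_adjoint (mat_of_cols n ws) * mat_of_cols n ws = 1\<^sub>m n"
  proof (rule eq_matI)
    fix i j assume "i < dim_row (1\<^sub>m n)" "j < dim_col (1\<^sub>m n)"
    then have ij: "i < n" "j < n" by auto
    have "(mat_adjoint (mat_of_cols n ws) * mat_of_cols n ws) $$ (i, j) = ws ! j \<bullet>c ws ! i"
      using ws ij ws_carrier[OF ij(1)] ws_carrier[OF ij(2)]
      by (simp add: scalar_prod_def lessThan_atLeast0 mat_of_cols_index mult.commute)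
    also have "\<dots> = 1\<^sub>m n $$ (i, j)" using orthonormal[OF ij(2,1)] ij by auto
    finally show "(mat_adjoint (mat_of_cols n ws) * mat_of_cols n ws) $$ (i, j) = 1\<^sub>m n $$ (i, j)" .
  qed (use ws in auto)
qed

text \<open>Gram--Schmidt applied to a basis starting with \<open>v\<close>, followed by normalization.\<close>

lemma unitary_mat_with_first_col:
  assumes v: "v \<in> carrier_vec n" and unit: "vnorm v = 1"
  shows "\<exists>U. unitary_mat n U \<and> col U 0 = v"
proof -
  interpret cof_vec_space n "TYPE(complex)" .
  have v0: "v \<noteq> 0\<^sub>v n" using unit by auto
  have n: "0 < n" using unit v by (cases n) (auto simp: vnorm_def)
  note bc = basis_completion[OF v v0]
  define ws where "ws = gram_schmidt n (basis_completion v)"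
  note gs = gram_schmidt_result[OF bc(2,4,5) ws_def]
  have ws: "set ws \<subseteq> carrier_vec n" "length ws = n" "corthogonal ws"
    using gs bc(6) by auto
  have ws_i: "ws ! i \<in> carrier_vec n" "ws ! i \<noteq> 0\<^sub>v n" if "i < n" for i
  proof -
    show "ws ! i \<in> carrier_vec n" using ws that nth_mem by blast
    show "ws ! i \<noteq> 0\<^sub>v n" using corthogonalD[OF ws(3), of i i] ws(2) that by auto
  qed
  have ws_0: "ws ! 0 = v"
  proof -
    obtain bs where "basis_completion v = v # bs"
      using bc(6,7) n by (cases "basis_completion v") auto
    then show ?thesis
      using ws(2) n v unfolding ws_def by (metis gram_schmidt_hd hd_conv_nth list.size(3) not_less0)
  qed
  define us where "us = map (\<lambda>w. complex_of_real (1 / vnorm w) \<cdot>\<^sub>v w) ws"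
  have us_i: "us ! i = complex_of_real (1 / vnorm (ws ! i)) \<cdot>\<^sub>v ws ! i" if "i < n" for i
    using that ws(2) unfolding us_def by simp
  have us: "set us \<subseteq> carrier_vec n" "length us = n"
    using ws unfolding us_def by auto
  have "us ! i \<bullet>c us ! j = (if i = j then 1 else 0)" if ij: "i < n" "j < n" for i j
  proof (cases "i = j")
    case True
    then show ?thesis
      using cscalar_prod_self[of "us ! i"] vnorm_normalize[OF ws_i[OF ij(1)]] us_i[OF ij(1)] by simp
  next
    case False
    then have "ws ! i \<bullet>c ws ! j = 0" using corthogonalD[OF ws(3)] ws(2) ij by auto
    then show ?thesis
      using False us_i ij by (simp add: cscalar_prod_smult[OF ws_i(1)[OF ij(1)] ws_i(1)[OF ij(2)]])
  qed
  then have "unitary_mat n (mat_of_cols n us)"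
    by (rule unitary_mat_of_cols[OF us])
  moreover have "col (mat_of_cols n us) 0 = v"
    using col_mat_of_cols[of 0 us n] us n us_i[OF n] ws_0 unit nth_mem by fastforce
  ultimately show ?thesis by blast
qed

lemma unit_eigenvector_exists:
  fixes A :: "complex mat"
  assumes A: "A \<in> carrier_mat n n" and n: "0 < n"
  shows "\<exists>e v. v \<in> carrier_vec n \<and> vnorm v = 1 \<and> A *\<^sub>v v = e \<cdot>\<^sub>v v"
proof -
  obtain es where cp: "char_poly A = (\<Prod>a\<leftarrow>es. [:- a, 1:])" and len: "length es = n"
    using char_poly_factorized[OF A] by blast
  then obtain e es' where es: "es = e # es'" using n by (cases es) auto
  have "eigenvalue A e" unfolding eigenvalue_root_char_poly[OF A] cp es by simp
  then have "eigenvector A (find_eigenvector A e) e" by (rule find_eigenvector[OF A])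
  then have w: "find_eigenvector A e \<in> carrier_vec n" "find_eigenvector A e \<noteq> 0\<^sub>v n"
    "A *\<^sub>v find_eigenvector A e = e \<cdot>\<^sub>v find_eigenvector A e"
    using A unfolding eigenvector_def by auto
  define v where "v = complex_of_real (1 / vnorm (find_eigenvector A e)) \<cdot>\<^sub>v find_eigenvector A e"
  have "A *\<^sub>v v = e \<cdot>\<^sub>v v"
    unfolding v_def using w by (simp add: mult_mat_vec[OF A w(1)] smult_smult_assoc mult.commute)
  moreover have "v \<in> carrier_vec n" "vnorm v = 1"
    unfolding v_def using w vnorm_normalize[OF w(1,2)] by auto
  ultimately show ?thesis by blast
qed

lemma hermitian_unitary_deflation:
  fixes A :: "complex mat"
  assumes A: "A \<in> carrier_mat (Suc k) (Suc k)" and herm: "mat_adjoint A = A"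
    and U: "unitary_mat (Suc k) U" and eigen: "A *\<^sub>v col U 0 = e \<cdot>\<^sub>v col U 0"
  obtains A' where "A' \<in> carrier_mat k k" "mat_adjoint A' = A'"
    "mat_adjoint U * A * U = four_block_mat (mat 1 1 (\<lambda>_. e)) (0\<^sub>m 1 k) (0\<^sub>m k 1) A'"
proof -
  have Uc: "U \<in> carrier_mat (Suc k) (Suc k)" and UU: "mat_adjoint U * U = 1\<^sub>m (Suc k)"
    using U unfolding unitary_mat_def by auto
  define B where "B = mat_adjoint U * A * U"
  have B: "B \<in> carrier_mat (Suc k) (Suc k)"
    unfolding B_def using Uc A by (simp add: square_mat_simps[where n = "Suc k"])
  have "mat_adjoint B = mat_adjoint U * mat_adjoint (mat_adjoint U * A)"
    unfolding B_def by (rule mat_adjoint_mult[OF mult_carrier_mat[OF mat_adjoint_carrier_mat[OF Uc] A] Uc])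
  also have "\<dots> = B"
    unfolding B_def mat_adjoint_mult[OF mat_adjoint_carrier_mat[OF Uc] A] herm mat_adjoint_mat_adjoint
    using Uc A by (simp add: square_mat_simps[where n = "Suc k"])
  finally have herm_B: "mat_adjoint B = B" .
  have "col B 0 = mat_adjoint U *\<^sub>v (A *\<^sub>v col U 0)"
    unfolding B_def using Uc A
    by (simp add: square_mat_simps[where n = "Suc k"] mult_mat_vec_def
        col_mult2[where nr = "Suc k" and n = "Suc k" and nc = "Suc k"])
  also have "\<dots> = e \<cdot>\<^sub>v (mat_adjoint U *\<^sub>v col U 0)"
    unfolding eigen using Uc by (intro mult_mat_vec) auto
  also have "mat_adjoint U *\<^sub>v col U 0 = unit_vec (Suc k) 0"
    using col_mult2[of "mat_adjoint U" "Suc k" "Suc k" U "Suc k" 0] Uc UU by simp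
  finally have col0: "col B 0 = e \<cdot>\<^sub>v unit_vec (Suc k) 0" .
  have B_i0: "B $$ (i, 0) = (if i = 0 then e else 0)" if "i < Suc k" for i
    using arg_cong[OF col0, of "\<lambda>w. w $ i"] B that by auto
  have B_0j: "B $$ (0, Suc j) = 0" if "j < k" for j
    using B_i0[of "Suc j"] that B arg_cong[OF herm_B, of "\<lambda>M. M $$ (0, Suc j)"] by simp
  define A' where "A' = mat k k (\<lambda>(i, j). B $$ (Suc i, Suc j))"
  show thesis
  proof
    show "A' \<in> carrier_mat k k" unfolding A'_def by simp
    show "mat_adjoint A' = A'"
    proof (rule eq_matI)
      fix i j assume "i < dim_row A'" "j < dim_col A'"
      then have ij: "i < k" "j < k" by (auto simp: A'_def)
      then show "mat_adjoint A' $$ (i, j) = A' $$ (i, j)"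
        using B arg_cong[OF herm_B, of "\<lambda>M. M $$ (Suc i, Suc j)"] by (simp add: A'_def)
    qed (simp_all add: A'_def)
    show "mat_adjoint U * A * U = four_block_mat (mat 1 1 (\<lambda>_. e)) (0\<^sub>m 1 k) (0\<^sub>m k 1) A'"
      unfolding B_def[symmetric]
    proof (rule eq_matI)
      fix i j assume "i < dim_row (four_block_mat (mat 1 1 (\<lambda>_. e)) (0\<^sub>m 1 k) (0\<^sub>m k 1) A')"
        "j < dim_col (four_block_mat (mat 1 1 (\<lambda>_. e)) (0\<^sub>m 1 k) (0\<^sub>m k 1) A')"
      then have ij: "i < Suc k" "j < Suc k" by (auto simp: A'_def)
      show "B $$ (i, j) = four_block_mat (mat 1 1 (\<lambda>_. e)) (0\<^sub>m 1 k) (0\<^sub>m k 1) A' $$ (i, j)"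
        using ij B_i0 B_0j by (cases i; cases j) (auto simp: A'_def)
    qed (use B in \<open>auto simp: A'_def\<close>)
  qed
qed

theorem hermitian_unitary_diagonalization:
  fixes A :: "complex mat"
  assumes "A \<in> carrier_mat n n" and "mat_adjoint A = A"
  shows "\<exists>U D. unitary_mat n U \<and> D \<in> carrier_mat n n \<and> diagonal_mat D \<and> A = U * D * mat_adjoint U"
  using assms
proof (induction n arbitrary: A)
  case 0
  have "unitary_mat 0 (1\<^sub>m 0)" by (rule unitary_matI) auto
  moreover have "diagonal_mat A" "A = 1\<^sub>m 0 * A * mat_adjoint (1\<^sub>m 0)"
    using 0 by (auto simp: diagonal_mat_def)
  ultimately show ?case using 0 by blast
next
  case (Suc k A)
  obtain e v where v: "v \<in> carrier_vec (Suc k)" "vnorm v = 1" "A *\<^sub>v v = e \<cdot>\<^sub>v v"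
    using unit_eigenvector_exists[OF Suc.prems(1)] by blast
  obtain U where U: "unitary_mat (Suc k) U" "col U 0 = v"
    using unitary_mat_with_first_col[OF v(1,2)] by blast
  obtain A' where A': "A' \<in> carrier_mat k k" "mat_adjoint A' = A'"
    and deflate: "mat_adjoint U * A * U = four_block_mat (mat 1 1 (\<lambda>_. e)) (0\<^sub>m 1 k) (0\<^sub>m k 1) A'"
    using hermitian_unitary_deflation[OF Suc.prems U(1)] U(2) v(3) by metis
  obtain V D' where V: "unitary_mat k V" "D' \<in> carrier_mat k k" "diagonal_mat D'"
    and A'_eq: "A' = V * D' * mat_adjoint V"
    using Suc.IH[OF A'] by blast
  have Vc: "V \<in> carrier_mat k k" using V(1) unfolding unitary_mat_def by simp
  define W where "W = four_block_mat (1\<^sub>m 1) (0\<^sub>m 1 k) (0\<^sub>m k 1) V"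
  define D where "D = four_block_mat (mat 1 1 (\<lambda>_. e)) (0\<^sub>m 1 k) (0\<^sub>m k 1) D'"
  have W: "unitary_mat (Suc k) W" and Wc: "W \<in> carrier_mat (Suc k) (Suc k)"
    unfolding W_def using unitary_mat_four_block[OF V(1)] unitary_mat_def by auto
  have Uc: "U \<in> carrier_mat (Suc k) (Suc k)" using U(1) unfolding unitary_mat_def by simp
  have D: "D \<in> carrier_mat (Suc k) (Suc k)"
    unfolding D_def using four_block_carrier_mat[of "mat 1 1 (\<lambda>_. e)" 1 1 D' k k] V(2) by simp
  have "diagonal_mat D"
    using V(2,3) unfolding diagonal_mat_def D_def by auto
  have block: "four_block_mat (mat 1 1 (\<lambda>_. e)) (0\<^sub>m 1 k) (0\<^sub>m k 1) A' = W * D * mat_adjoint W"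
    unfolding W_def D_def A'_eq by (rule four_block_conj_diag[OF mat_carrier Vc V(2), symmetric])
  have "A = U * (mat_adjoint U * A * U) * mat_adjoint U"
    using unitary_mat_conj_cancel[OF U(1) Suc.prems(1)] by simp
  also have "\<dots> = (U * W) * D * mat_adjoint (U * W)"
    unfolding deflate block using Uc Wc D
    by (simp add: mat_adjoint_mult[of _ "Suc k" "Suc k"] square_mat_simps[where n = "Suc k"])
  finally show ?case
    using unitary_mat_mult[OF U(1) W] D \<open>diagonal_mat D\<close> by blast
qed

section \<open>Singular values as column norms\<close>

lemma proots_linear_factors: "proots (\<Prod>a\<leftarrow>as. [:- a, 1:]) = mset (as :: 'a :: idom list)"
proof (induction as)
  case (Cons a as)
  have "(\<Prod>a\<leftarrow>as. [:- a, 1:]) \<noteq> 0" by (auto simp: prod_list_zero_iff)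
  then have "proots ([:- a, 1:] * (\<Prod>a\<leftarrow>as. [:- a, 1:])) = {#a#} + mset as"
    by (subst proots_mult) (simp_all add: Cons.IH)
  then show ?case by simp
qed simp

lemma char_poly_unitary_diag:
  assumes U: "unitary_mat n U" and D: "D \<in> carrier_mat n n" "diagonal_mat D"
  shows "char_poly (U * D * mat_adjoint U) = (\<Prod>a\<leftarrow>diag_mat D. [:- a, 1:])"
proof -
  have "similar_mat (U * D * mat_adjoint U) D"
    unfolding similar_mat_def
    by (rule exI[of _ U], rule exI[of _ "mat_adjoint U"])
      (use U D in \<open>auto simp: similar_mat_wit_def unitary_mat_def Let_def\<close>)
  moreover have "upper_triangular D"
    using D unfolding diagonal_mat_def upper_triangular_def by auto
  ultimately show ?thesis
    using char_poly_similar char_poly_upper_triangular[OF D(1)] by metis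
qed

text \<open>If \<open>E\<^sup>H E = U D U\<^sup>H\<close>, the columns of \<open>E U\<close> are orthogonal and their norms are the singular
  values of \<open>E\<close>.\<close>

lemma nuclear_norm_eq_sum_col_norms:
  fixes E :: "complex mat"
  assumes E: "E \<in> carrier_mat m n"
  obtains U where "unitary_mat n U" "nuclear_norm E = (\<Sum>i<n. vnorm (col (E * U) i))"
proof -
  have Eh: "mat_adjoint E \<in> carrier_mat n m" using E by simp
  have H: "mat_adjoint E * E \<in> carrier_mat n n" "mat_adjoint (mat_adjoint E * E) = mat_adjoint E * E"
    using mult_carrier_mat[OF Eh E] by (simp_all add: mat_adjoint_mult[OF Eh E])
  obtain U D where U: "unitary_mat n U" and D: "D \<in> carrier_mat n n" "diagonal_mat D"
    and H_eq: "mat_adjoint E * E = U * D * mat_adjoint U"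
    using hermitian_unitary_diagonalization[OF H] by blast
  have Uc: "U \<in> carrier_mat n n" and Uh: "mat_adjoint U \<in> carrier_mat n n"
    and UU: "mat_adjoint U * U = 1\<^sub>m n"
    using U unfolding unitary_mat_def by auto
  have "D = (mat_adjoint U * U) * D * (mat_adjoint U * U)" unfolding UU using D by simp
  also have "\<dots> = mat_adjoint U * (U * D * mat_adjoint U) * U"
    using Uc D by (simp add: square_mat_simps[where n = n])
  also have "\<dots> = mat_adjoint (E * U) * (E * U)"
    unfolding H_eq[symmetric] mat_adjoint_mult[OF E Uc]
    by (simp add: assoc_mult_mat[OF Uh H(1) Uc] assoc_mult_mat[OF Eh E Uc]
        assoc_mult_mat[OF Uh Eh mult_carrier_mat[OF E Uc]])
  finally have D_eq: "D = mat_adjoint (E * U) * (E * U)" .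
  have D_diag: "D $$ (i, i) = complex_of_real ((vnorm (col (E * U) i))\<^sup>2)" if "i < n" for i
  proof -
    have "D $$ (i, i) = col (E * U) i \<bullet>c col (E * U) i"
      unfolding D_eq using E Uc that by (simp add: scalar_prod_def lessThan_atLeast0 mult.commute)
    then show ?thesis by (simp add: cscalar_prod_self)
  qed
  have "nuclear_norm E = sum_mset (image_mset (\<lambda>z. sqrt (Re z)) (mset (diag_mat D)))"
    unfolding nuclear_norm_def singular_values_def H_eq char_poly_unitary_diag[OF U D]
      proots_linear_factors ..
  also have "\<dots> = (\<Sum>i<n. sqrt (Re (D $$ (i, i))))"
    unfolding diag_mat_def mset_map[symmetric] sum_mset_sum_list map_map o_def
      sum_set_upt_conv_sum_list_nat[symmetric]
    using D by (simp add: atLeast0LessThan)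
  also have "\<dots> = (\<Sum>i<n. vnorm (col (E * U) i))"
    by (intro sum.cong refl) (simp add: D_diag vnorm_nonneg)
  finally show thesis using that U by blast
qed

text \<open>Finite sums of \<open>m \<times> n\<close> matrices; \<open>sum\<close> itself is unsuitable because the zero of type
  \<open>'a mat\<close> is the \<open>0 \<times> 0\<close> matrix.\<close>

definition mat_sum :: "nat \<Rightarrow> nat \<Rightarrow> ('i \<Rightarrow> complex mat) \<Rightarrow> 'i set \<Rightarrow> complex mat" where
  "mat_sum m n F S = mat m n (\<lambda>(a, b). \<Sum>s\<in>S. F s $$ (a, b))"

lemma mat_sum_carrier [simp]: "mat_sum m n F S \<in> carrier_mat m n"
  unfolding mat_sum_def by simp

lemma mat_sum_empty: "mat_sum m n F {} = 0\<^sub>m m n"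
  unfolding mat_sum_def by (rule eq_matI) auto

lemma mat_sum_insert:
  assumes "finite S" "x \<notin> S" "F x \<in> carrier_mat m n"
  shows "mat_sum m n F (insert x S) = F x + mat_sum m n F S"
  unfolding mat_sum_def by (rule eq_matI) (use assms in auto)

lemma clinear_opD:
  assumes "clinear_op m n p A" "X \<in> carrier_mat m n"
  shows "A X \<in> carrier_vec p"
    and "Y \<in> carrier_mat m n \<Longrightarrow> A (X + Y) = A X + A Y"
    and "A (c \<cdot>\<^sub>m X) = c \<cdot>\<^sub>v A X"
  using assms unfolding clinear_op_def by blast+

lemma clinear_op_zero:
  assumes "clinear_op m n p A"
  shows "A (0\<^sub>m m n) = 0\<^sub>v p"
proof -
  have "A (0\<^sub>m m n) = A (0 \<cdot>\<^sub>m 0\<^sub>m m n)" by (metis smult_zero_mat)  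
  also have "\<dots> = 0 \<cdot>\<^sub>v A (0\<^sub>m m n)" using clinear_opD(3)[OF assms zero_carrier_mat] .
  also have "\<dots> = 0\<^sub>v p" using clinear_opD(1)[OF assms zero_carrier_mat] by auto
  finally show ?thesis .
qed

lemma vnorm_clinear_op_mat_sum_le:
  assumes A: "clinear_op m n p A" and "finite S" "\<And>s. s \<in> S \<Longrightarrow> F s \<in> carrier_mat m n"
  shows "vnorm (A (mat_sum m n F S)) \<le> (\<Sum>s\<in>S. vnorm (A (F s)))"
  using assms(2,3)
proof (induction S rule: finite_induct)
  case empty
  then show ?case using clinear_op_zero[OF A] by (simp add: mat_sum_empty)
next
  case (insert x S)
  have Fx: "F x \<in> carrier_mat m n" using insert by simp
  have "vnorm (A (mat_sum m n F (insert x S))) = vnorm (A (F x) + A (mat_sum m n F S))"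
    using clinear_opD(2)[OF A Fx mat_sum_carrier[of m n F S]] mat_sum_insert[where F = F, OF insert(1,2) Fx] by simp
  also have "\<dots> \<le> vnorm (A (F x)) + vnorm (A (mat_sum m n F S))"
    using clinear_opD(1)[OF A] Fx by (intro vnorm_triangle) auto
  also have "\<dots> \<le> vnorm (A (F x)) + (\<Sum>s\<in>S. vnorm (A (F s)))" using insert by simp
  finally show ?case using insert by simp
qed

lemma frob_norm_nonneg: "0 \<le> frob_norm X"
  unfolding frob_norm_def by (auto intro!: sum_nonneg)

lemma cmod_le_frob_norm:
  assumes "X \<in> carrier_mat m n" "a < m" "b < n"
  shows "cmod (X $$ (a, b)) \<le> frob_norm X"
proof -
  have "(cmod (X $$ (a, b)))\<^sup>2 \<le> (\<Sum>j<n. (cmod (X $$ (a, j)))\<^sup>2)"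
    by (rule member_le_sum[of b "{..<n}" "\<lambda>j. (cmod (X $$ (a, j)))\<^sup>2"]) (use assms in auto)
  also have "\<dots> \<le> (\<Sum>i<m. \<Sum>j<n. (cmod (X $$ (i, j)))\<^sup>2)"
    by (rule member_le_sum[of a "{..<m}" "\<lambda>i. \<Sum>j<n. (cmod (X $$ (i, j)))\<^sup>2"])
      (use assms in \<open>auto intro: sum_nonneg\<close>)
  finally show ?thesis using assms unfolding frob_norm_def by (simp add: real_le_rsqrt)
qed

lemma clinear_op_bounded:
  assumes A: "clinear_op m n p A"
  obtains K where "\<And>X. X \<in> carrier_mat m n \<Longrightarrow> vnorm (A X) \<le> K * frob_norm X"
proof -
  define I where "I = {..<m} \<times> {..<n}"
  define unit where "unit x = mat m n (\<lambda>y. if y = x then 1 else 0 :: complex)" for x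
  have unit: "unit x \<in> carrier_mat m n" for x unfolding unit_def by simp
  have bound: "vnorm (A X) \<le> frob_norm X * (\<Sum>x\<in>I. vnorm (A (unit x)))" if X: "X \<in> carrier_mat m n" for X
  proof -
    have "X = mat_sum m n (\<lambda>x. X $$ x \<cdot>\<^sub>m unit x) I"
      by (rule eq_matI) (use X in \<open>auto simp: mat_sum_def unit_def I_def sum.delta' if_distrib
          cong: if_cong\<close>)
    then have "vnorm (A X) \<le> (\<Sum>x\<in>I. vnorm (A (X $$ x \<cdot>\<^sub>m unit x)))"
      using vnorm_clinear_op_mat_sum_le[OF A, of I "\<lambda>x. X $$ x \<cdot>\<^sub>m unit x"] unit
      by (simp add: I_def)
    also have "\<dots> = (\<Sum>x\<in>I. cmod (X $$ x) * vnorm (A (unit x)))"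
      using clinear_opD(3)[OF A unit] by (simp add: vnorm_smult)
    also have "\<dots> \<le> (\<Sum>x\<in>I. frob_norm X * vnorm (A (unit x)))"
      using cmod_le_frob_norm[OF X] vnorm_nonneg
      by (intro sum_mono mult_right_mono) (auto simp: I_def)
    finally show ?thesis by (simp add: sum_distrib_left)
  qed
  show thesis
    by (rule that[of "\<Sum>x\<in>I. vnorm (A (unit x))"]) (use bound in \<open>simp add: mult.commute\<close>)
qed

text \<open>The infimum defining \<open>rip_const\<close> need not be attained; instead, the ratio
  \<open>(\<Parallel>A X\<Parallel>\<^sup>2 - \<Parallel>X\<Parallel>\<^sub>F\<^sup>2) / \<Parallel>X\<Parallel>\<^sub>F\<^sup>2\<close> is a lower bound of the set, which is nonempty because \<open>A\<close> is
  bounded.\<close>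

lemma rip_const_upper_bound:
  assumes A: "clinear_op m n p A" and \<delta>: "rip_const m n A s \<le> \<delta>"
    and X: "X \<in> carrier_mat m n" "mrank X \<le> s"
  shows "(vnorm (A X))\<^sup>2 \<le> (1 + \<delta>) * (frob_norm X)\<^sup>2"
proof -
  define D where "D = {\<delta>. \<delta> \<ge> 0 \<and> (\<forall>X \<in> carrier_mat m n. mrank X \<le> s \<longrightarrow>
       (1 - \<delta>) * (frob_norm X)\<^sup>2 \<le> (vnorm (A X))\<^sup>2 \<and> (vnorm (A X))\<^sup>2 \<le> (1 + \<delta>) * (frob_norm X)\<^sup>2)}"
  have upper: "(vnorm (A X))\<^sup>2 \<le> (1 + d) * (frob_norm X)\<^sup>2" if "d \<in> D" for d
    using that X unfolding D_def by blast
  obtain K where K: "\<And>Y. Y \<in> carrier_mat m n \<Longrightarrow> vnorm (A Y) \<le> K * frob_norm Y"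
    using clinear_op_bounded[OF A] by blast
  have "K\<^sup>2 + 1 \<in> D"
    unfolding D_def
  proof (intro CollectI conjI ballI impI)
    fix Y :: "complex mat" assume Y: "Y \<in> carrier_mat m n"
    have "(vnorm (A Y))\<^sup>2 \<le> (K * frob_norm Y)\<^sup>2"
      using K[OF Y] vnorm_nonneg by (intro power_mono) auto
    then show "(vnorm (A Y))\<^sup>2 \<le> (1 + (K\<^sup>2 + 1)) * (frob_norm Y)\<^sup>2"
      by (simp add: power_mult_distrib algebra_simps add_increasing)
    have "(1 - (K\<^sup>2 + 1)) * (frob_norm Y)\<^sup>2 = - (K\<^sup>2 * (frob_norm Y)\<^sup>2)"
      by (simp add: algebra_simps)
    then show "(1 - (K\<^sup>2 + 1)) * (frob_norm Y)\<^sup>2 \<le> (vnorm (A Y))\<^sup>2"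
      using mult_nonneg_nonneg[OF zero_le_power2[of K] zero_le_power2[of "frob_norm Y"]]
        zero_le_power2[of "vnorm (A Y)"] by linarith
  qed simp
  then have "D \<noteq> {}" by blast
  have "(vnorm (A X))\<^sup>2 - (frob_norm X)\<^sup>2 \<le> \<delta> * (frob_norm X)\<^sup>2"
  proof (cases "frob_norm X = 0")
    case True
    then show ?thesis using upper[OF \<open>K\<^sup>2 + 1 \<in> D\<close>] by simp
  next
    case False
    then have f: "0 < (frob_norm X)\<^sup>2" by simp
    have "((vnorm (A X))\<^sup>2 - (frob_norm X)\<^sup>2) / (frob_norm X)\<^sup>2 \<le> Inf D"
      using upper f by (intro cInf_greatest[OF \<open>D \<noteq> {}\<close>]) (simp add: field_simps)
    also have "Inf D \<le> \<delta>" using \<delta> unfolding rip_const_def D_def[symmetric] .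
    finally show ?thesis using f by (simp add: field_simps)
  qed
  then show ?thesis by (simp add: algebra_simps)
qed

lemma rip_const_norm_le:
  assumes A: "clinear_op m n p A" and "rip_const m n A s \<le> \<delta>" and "1 + \<delta> \<le> c\<^sup>2" and "0 \<le> c"
    and X: "X \<in> carrier_mat m n" "mrank X \<le> s"
  shows "vnorm (A X) \<le> c * frob_norm X"
proof -
  have "(vnorm (A X))\<^sup>2 \<le> (1 + \<delta>) * (frob_norm X)\<^sup>2"
    by (rule rip_const_upper_bound[OF A assms(2) X])
  also have "\<dots> \<le> (c * frob_norm X)\<^sup>2"
    using assms(3) by (simp add: power_mult_distrib mult_right_mono)
  finally show ?thesis
    by (rule power2_le_imp_le) (simp add: assms(4) frob_norm_nonneg)
qed

section \<open>Partial singular value expansions\<close>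

text \<open>\<open>outer_sum m n Q U S\<close> is \<open>\<Sum>i\<in>S. col Q i (col U i)\<^sup>H\<close>, the product \<open>Q U\<^sup>H\<close> restricted to the
  columns indexed by \<open>S\<close>.\<close>

definition outer_sum :: "nat \<Rightarrow> nat \<Rightarrow> complex mat \<Rightarrow> complex mat \<Rightarrow> nat set \<Rightarrow> complex mat" where
  "outer_sum m n Q U S = mat m n (\<lambda>(a, b). \<Sum>i\<in>S. Q $$ (a, i) * cnj (U $$ (b, i)))"

lemma outer_sum_dim [simp]:
  "dim_row (outer_sum m n Q U S) = m" "dim_col (outer_sum m n Q U S) = n"
  unfolding outer_sum_def by simp_all

lemma outer_sum_carrier [simp]: "outer_sum m n Q U S \<in> carrier_mat m n"
  unfolding outer_sum_def by simp

lemma mrank_outer_sum_le: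
  assumes "finite S"
  shows "mrank (outer_sum m n Q U S) \<le> card S"
  using assms
proof (induction S rule: finite_induct)
  case empty
  interpret vec_space "TYPE(complex)" m .
  have "outer_sum m n Q U {} = 0\<^sub>m m n" unfolding outer_sum_def by (rule eq_matI) auto
  then show ?case unfolding mrank_def using rank_0I by simp
next
  case (insert x S)
  interpret vec_space "TYPE(complex)" m .
  have split: "outer_sum m n Q U (insert x S) = outer_sum m n Q U {x} + outer_sum m n Q U S"
    unfolding outer_sum_def by (rule eq_matI) (use insert in auto)
  have "rank (outer_sum m n Q U {x}) \<le> 1"
    by (rule rank_le_1_product_entries[where f = "\<lambda>a. Q $$ (a, x)" and g = "\<lambda>b. cnj (U $$ (b, x))"])
      (auto simp: outer_sum_def)
  moreover have "rank (outer_sum m n Q U (insert x S)) \<le> rank (outer_sum m n Q U {x}) + rank (outer_sum m n Q U S)"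
    unfolding split by (rule rank_subadditive; rule outer_sum_carrier)
  ultimately show ?case using insert unfolding mrank_def by simp
qed

lemma outer_sum_UN:
  assumes "finite J" "\<And>j. j \<in> J \<Longrightarrow> finite (S j)"
    "\<And>j k. j \<in> J \<Longrightarrow> k \<in> J \<Longrightarrow> j \<noteq> k \<Longrightarrow> S j \<inter> S k = {}"
  shows "outer_sum m n Q U (\<Union>j\<in>J. S j) = mat_sum m n (\<lambda>j. outer_sum m n Q U (S j)) J"
  unfolding outer_sum_def mat_sum_def
  by (rule eq_matI) (use assms in \<open>auto simp: sum.UNION_disjoint\<close>)

lemma outer_sum_unitary:
  assumes E: "E \<in> carrier_mat m n" and U: "unitary_mat n U"
  shows "E = outer_sum m n (E * U) U {..<n}"
proof -
  have Uc: "U \<in> carrier_mat n n" and UU: "U * mat_adjoint U = 1\<^sub>m n"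
    using U unfolding unitary_mat_def by auto
  have "E = E * (U * mat_adjoint U)" unfolding UU using E by simp
  also have "\<dots> = (E * U) * mat_adjoint U"
    using assoc_mult_mat[OF E Uc mat_adjoint_carrier_mat[OF Uc]] by simp
  also have "\<dots> = outer_sum m n (E * U) U {..<n}"
    unfolding outer_sum_def
    by (rule eq_matI) (use E Uc in \<open>auto simp: scalar_prod_def lessThan_atLeast0\<close>)
  finally show ?thesis .
qed

lemma sum_cmod_sq_orthonormal_comb:
  assumes U: "U \<in> carrier_mat n N" "mat_adjoint U * U = 1\<^sub>m N" and S: "S \<subseteq> {..<N}"
  shows "(\<Sum>b<n. (cmod (\<Sum>i\<in>S. x i * cnj (U $$ (b, i))))\<^sup>2) = (\<Sum>i\<in>S. (cmod (x i))\<^sup>2)"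
proof -
  have fin: "finite S" using S finite_subset by blast
  have orth: "(\<Sum>b<n. cnj (U $$ (b, i)) * U $$ (b, j)) = (if i = j then 1 else 0)"
    if "i \<in> S" "j \<in> S" for i j
  proof -
    have ij: "i < N" "j < N" using S that by auto
    have "(mat_adjoint U * U) $$ (i, j) = (\<Sum>b<n. cnj (U $$ (b, i)) * U $$ (b, j))"
      using U(1) ij by (simp add: scalar_prod_def lessThan_atLeast0)
    then show ?thesis using U(2) ij by simp
  qed
  have "complex_of_real (\<Sum>b<n. (cmod (\<Sum>i\<in>S. x i * cnj (U $$ (b, i))))\<^sup>2)
      = (\<Sum>b<n. \<Sum>i\<in>S. \<Sum>j\<in>S. x i * cnj (x j) * (cnj (U $$ (b, i)) * U $$ (b, j)))"
    by (simp only: of_real_sum complex_norm_square cnj_sum sum_product, intro sum.cong refl)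
      (simp add: mult_ac)
  also have "\<dots> = (\<Sum>i\<in>S. \<Sum>j\<in>S. x i * cnj (x j) * (\<Sum>b<n. cnj (U $$ (b, i)) * U $$ (b, j)))"
    by (subst sum.swap, subst sum.swap) (simp add: sum_distrib_left)
  also have "\<dots> = (\<Sum>i\<in>S. x i * cnj (x i))"
    using fin by (simp add: orth if_distrib[of "\<lambda>t. _ * t"] sum.delta cong: sum.cong if_cong)
  also have "\<dots> = complex_of_real (\<Sum>i\<in>S. (cmod (x i))\<^sup>2)"
    by (simp only: of_real_sum complex_norm_square)
  finally show ?thesis using of_real_eq_iff by blast
qed

lemma frob_norm_outer_sum:
  assumes Q: "Q \<in> carrier_mat m N" and U: "U \<in> carrier_mat n N" "mat_adjoint U * U = 1\<^sub>m N"
    and S: "S \<subseteq> {..<N}"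
  shows "frob_norm (outer_sum m n Q U S) = L2_set (\<lambda>i. vnorm (col Q i)) S"
proof -
  have "(\<Sum>a<m. \<Sum>b<n. (cmod (outer_sum m n Q U S $$ (a, b)))\<^sup>2)
      = (\<Sum>a<m. \<Sum>i\<in>S. (cmod (Q $$ (a, i)))\<^sup>2)"
    using sum_cmod_sq_orthonormal_comb[OF U S] by (simp add: outer_sum_def)
  also have "\<dots> = (\<Sum>i\<in>S. (vnorm (col Q i))\<^sup>2)"
    using Q S by (subst sum.swap) (auto simp: vnorm_def sum_nonneg intro!: sum.cong)
  finally show ?thesis unfolding frob_norm_def L2_set_def by simp
qed

section \<open>Blocks of a nonincreasing sequence\<close>

definition index_block :: "nat \<Rightarrow> nat \<Rightarrow> nat \<Rightarrow> nat set" where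
  "index_block r N j = {t. t < N \<and> t div r = j}"

lemma index_block_subset: "index_block r N j \<subseteq> {..<N}"
  by (auto simp: index_block_def)

lemma finite_index_block [simp]: "finite (index_block r N j)"
  using finite_subset[OF index_block_subset] by blast

lemma index_block_disjoint: "j \<noteq> k \<Longrightarrow> index_block r N j \<inter> index_block r N k = {}"
  by (auto simp: index_block_def)

lemma UN_index_block: "(\<Union>j<N. index_block r N j) = {..<N}"
  by (auto simp: index_block_def intro: le_less_trans[OF div_le_dividend])

lemma mem_index_block_iff:
  assumes "0 < r"
  shows "t \<in> index_block r N j \<longleftrightarrow> t < N \<and> j * r \<le> t \<and> t < Suc j * r"
proof -
  have "t div r = j \<longleftrightarrow> j \<le> t div r \<and> t div r < Suc j" by auto
  then show ?thesis
    using assms unfolding index_block_def by (simp add: less_eq_div_iff_mult_less_eq div_less_iff_less_mult)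
qed

lemma card_index_block_le:
  assumes "0 < r"
  shows "card (index_block r N j) \<le> r"
proof -
  have "index_block r N j \<subseteq> {j * r..<Suc j * r}" using mem_index_block_iff[OF assms] by auto
  from card_mono[OF _ this] show ?thesis by simp
qed

lemma sum_index_blocks: "(\<Sum>j<N. \<Sum>t\<in>index_block r N j. f t) = (\<Sum>t<N. f t)"
  using sum.UNION_disjoint[of "{..<N}" "index_block r N" f] index_block_disjoint
  by (simp add: UN_index_block)

text \<open>Every entry of a block is dominated by every entry of the preceding block, hence by its
  average; the preceding block is full because the next one is nonempty.\<close>

lemma L2_set_index_block_Suc_le:
  fixes \<tau> :: "nat \<Rightarrow> real"
  assumes r: "0 < r" and nonneg: "\<And>t. 0 \<le> \<tau> t"
    and antimono: "\<And>s t. s \<le> t \<Longrightarrow> t < N \<Longrightarrow> \<tau> t \<le> \<tau> s"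
  shows "L2_set \<tau> (index_block r N (Suc j)) \<le> (\<Sum>t\<in>index_block r N j. \<tau> t) / sqrt r"
proof (cases "index_block r N (Suc j) = {}")
  case True
  then show ?thesis using nonneg by (simp add: sum_nonneg)
next
  case False
  then obtain s0 where "s0 \<in> index_block r N (Suc j)" by blast
  then have full: "index_block r N j = {j * r..<Suc j * r}"
    using mem_index_block_iff[OF r] by auto
  define avg where "avg = (\<Sum>t\<in>index_block r N j. \<tau> t) / r"
  have "\<tau> s \<le> avg" if s: "s \<in> index_block r N (Suc j)" for s
  proof -
    have "\<tau> s \<le> \<tau> t" if "t \<in> index_block r N j" for t
      using that s mem_index_block_iff[OF r] by (auto intro!: antimono)
    then have "(\<Sum>t\<in>index_block r N j. \<tau> s) \<le> (\<Sum>t\<in>index_block r N j. \<tau> t)" by (rule sum_mono)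
    then have "real r * \<tau> s \<le> (\<Sum>t\<in>index_block r N j. \<tau> t)" by (simp add: full)
    then show ?thesis using r by (simp add: avg_def field_simps)
  qed
  then have "L2_set \<tau> (index_block r N (Suc j)) \<le> L2_set (\<lambda>_. avg) (index_block r N (Suc j))"
    by (intro L2_set_mono nonneg)
  also have "\<dots> = sqrt (card (index_block r N (Suc j))) * avg"
    using nonneg by (simp add: L2_set_constant avg_def sum_nonneg)
  also have "\<dots> \<le> sqrt r * avg"
    using card_index_block_le[OF r] nonneg
    by (intro mult_right_mono) (simp_all add: avg_def sum_nonneg)
  also have "\<dots> = (\<Sum>t\<in>index_block r N j. \<tau> t) / sqrt r"
    using r by (simp add: avg_def field_simps real_sqrt_mult_self[symmetric, of "real r"])
  finally show ?thesis .
qed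

lemma sum_L2_set_index_blocks_le:
  fixes \<tau> :: "nat \<Rightarrow> real"
  assumes r: "0 < r" and nonneg: "\<And>t. 0 \<le> \<tau> t"
    and antimono: "\<And>s t. s \<le> t \<Longrightarrow> t < N \<Longrightarrow> \<tau> t \<le> \<tau> s"
  shows "(\<Sum>j<N. L2_set \<tau> (index_block r N j)) \<le> L2_set \<tau> {..<N} + (\<Sum>t<N. \<tau> t) / sqrt r"
proof (cases N)
  case 0
  then show ?thesis by simp
next
  case (Suc M)
  have "L2_set \<tau> (index_block r N 0) \<le> L2_set \<tau> {..<N}"
    unfolding L2_set_def by (intro real_sqrt_le_mono sum_mono2) (auto simp: index_block_def)
  then have "(\<Sum>j<N. L2_set \<tau> (index_block r N j))
      \<le> L2_set \<tau> {..<N} + (\<Sum>j<M. (\<Sum>t\<in>index_block r N j. \<tau> t) / sqrt r)"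
    unfolding Suc sum.lessThan_Suc_shift
    by (intro add_mono sum_mono L2_set_index_block_Suc_le[OF r nonneg antimono]) (auto simp: Suc)
  also have "(\<Sum>j<M. (\<Sum>t\<in>index_block r N j. \<tau> t) / sqrt r)
      \<le> (\<Sum>j<N. (\<Sum>t\<in>index_block r N j. \<tau> t) / sqrt r)"
    unfolding Suc using nonneg by (intro sum_mono2) (auto simp: sum_nonneg)
  also have "\<dots> = (\<Sum>t<N. \<tau> t) / sqrt r"
    by (simp add: sum_divide_distrib[symmetric] sum_index_blocks)
  finally show ?thesis by simp
qed

lemma ex_bij_betw_antimono:
  fixes f :: "nat \<Rightarrow> real"
  shows "\<exists>\<pi>. bij_betw \<pi> {..<N} {..<N} \<and> (\<forall>s t. s \<le> t \<longrightarrow> t < N \<longrightarrow> f (\<pi> t) \<le> f (\<pi> s))"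
proof -
  define xs where "xs = sort_key (\<lambda>i. - f i) [0..<N]"
  have len: "length xs = N" and dist: "distinct xs" and set: "set xs = {..<N}"
    unfolding xs_def by (simp_all add: distinct_sort atLeast0LessThan)
  have sorted: "sorted (map (\<lambda>i. - f i) xs)" unfolding xs_def by (rule sorted_sort_key)
  have "bij_betw ((!) xs) {..<N} {..<N}"
    by (rule bij_betw_nth[OF dist]) (simp_all add: len set)
  moreover have "f (xs ! t) \<le> f (xs ! s)" if "s \<le> t" "t < N" for s t
    using sorted_nth_mono[OF sorted that(1)] that len by simp
  ultimately show ?thesis by blast
qed

text \<open>Sort the indices by decreasing \<open>\<sigma>\<close> and cut them into consecutive blocks of length \<open>r\<close>.\<close>

lemma ex_partition_sum_L2_set_le:
  fixes \<sigma> :: "nat \<Rightarrow> real"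
  assumes r: "0 < r" and nonneg: "\<And>i. 0 \<le> \<sigma> i"
  obtains S where "\<And>j. S j \<subseteq> {..<N}" "\<And>j. card (S j) \<le> r" "(\<Union>j<N. S j) = {..<N}"
    "\<And>j k. j \<noteq> k \<Longrightarrow> S j \<inter> S k = {}"
    "(\<Sum>j<N. L2_set \<sigma> (S j)) \<le> L2_set \<sigma> {..<N} + (\<Sum>i<N. \<sigma> i) / sqrt r"
proof -
  obtain \<pi> where \<pi>: "bij_betw \<pi> {..<N} {..<N}"
    and sorted: "\<And>s t. s \<le> t \<Longrightarrow> t < N \<Longrightarrow> \<sigma> (\<pi> t) \<le> \<sigma> (\<pi> s)"
    using ex_bij_betw_antimono[of N \<sigma>] by blast
  have inj: "inj_on \<pi> {..<N}" using \<pi> by (rule bij_betw_imp_inj_on)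
  have L2_set_image: "L2_set \<sigma> (\<pi> ` T) = L2_set (\<sigma> \<circ> \<pi>) T" if "T \<subseteq> {..<N}" for T
    unfolding L2_set_def using inj_on_subset[OF inj that] by (simp add: sum.reindex)
  define S where "S j = \<pi> ` index_block r N j" for j
  show thesis
  proof
    show "S j \<subseteq> {..<N}" for j
      unfolding S_def using index_block_subset bij_betw_imp_surj_on[OF \<pi>] by blast
    show "card (S j) \<le> r" for j
      unfolding S_def using card_image_le[of "index_block r N j" \<pi>] card_index_block_le[OF r, of N j]
      by simp
    show "(\<Union>j<N. S j) = {..<N}"
      unfolding S_def image_UN[symmetric] UN_index_block using bij_betw_imp_surj_on[OF \<pi>] .
    show "S j \<inter> S k = {}" if "j \<noteq> k" for j k
      unfolding S_def inj_on_image_Int[OF inj index_block_subset index_block_subset, symmetric]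
      using index_block_disjoint[OF that] by simp
    have "(\<Sum>j<N. L2_set \<sigma> (S j)) = (\<Sum>j<N. L2_set (\<sigma> \<circ> \<pi>) (index_block r N j))"
      unfolding S_def using L2_set_image[OF index_block_subset] by simp
    also have "\<dots> \<le> L2_set (\<sigma> \<circ> \<pi>) {..<N} + (\<Sum>t<N. \<sigma> (\<pi> t)) / sqrt r"
      using sum_L2_set_index_blocks_le[OF r, of "\<sigma> \<circ> \<pi>" N] sorted nonneg by simp
    also have "L2_set (\<sigma> \<circ> \<pi>) {..<N} = L2_set \<sigma> {..<N}"
      using L2_set_image[of "{..<N}"] bij_betw_imp_surj_on[OF \<pi>] by simp
    also have "(\<Sum>t<N. \<sigma> (\<pi> t)) = (\<Sum>i<N. \<sigma> i)"
      using sum.reindex_bij_betw[OF \<pi>, of \<sigma>] by simp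
    finally show "(\<Sum>j<N. L2_set \<sigma> (S j)) \<le> L2_set \<sigma> {..<N} + (\<Sum>i<N. \<sigma> i) / sqrt r" .
  qed
qed

section \<open>Bounding a linear map by the Frobenius and nuclear norms\<close>

text \<open>Group the terms of the singular value expansion of \<open>E\<close> according to the partition above.\<close>

lemma low_rank_block_decomposition:
  fixes E :: "complex mat"
  assumes E: "E \<in> carrier_mat m n" and r: "0 < r"
  obtains F where "E = mat_sum m n F {..<n}" "\<And>j. F j \<in> carrier_mat m n" "\<And>j. mrank (F j) \<le> r"
    "(\<Sum>j<n. frob_norm (F j)) \<le> frob_norm E + nuclear_norm E / sqrt r"
proof -
  obtain U where U: "unitary_mat n U" and nuclear: "nuclear_norm E = (\<Sum>i<n. vnorm (col (E * U) i))"
    using nuclear_norm_eq_sum_col_norms[OF E] by blast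
  have Uc: "U \<in> carrier_mat n n" and UU: "mat_adjoint U * U = 1\<^sub>m n"
    using U unfolding unitary_mat_def by auto
  define Q where "Q = E * U"
  have Q: "Q \<in> carrier_mat m n" unfolding Q_def using mult_carrier_mat[OF E Uc] .
  define \<sigma> where "\<sigma> i = vnorm (col Q i)" for i
  have frob: "frob_norm (outer_sum m n Q U T) = L2_set \<sigma> T" if "T \<subseteq> {..<n}" for T
    using frob_norm_outer_sum[OF Q Uc UU that] by (simp add: \<sigma>_def[abs_def])
  obtain S where S: "\<And>j. S j \<subseteq> {..<n}" "\<And>j. card (S j) \<le> r" "(\<Union>j<n. S j) = {..<n}"
    "\<And>j k. j \<noteq> k \<Longrightarrow> S j \<inter> S k = {}"
    and sum_S: "(\<Sum>j<n. L2_set \<sigma> (S j)) \<le> L2_set \<sigma> {..<n} + (\<Sum>i<n. \<sigma> i) / sqrt r"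
    using ex_partition_sum_L2_set_le[OF r, of \<sigma> n] by (auto simp: \<sigma>_def vnorm_nonneg)
  define F where "F j = outer_sum m n Q U (S j)" for j
  have "E = outer_sum m n Q U (\<Union>j<n. S j)"
    unfolding S(3) Q_def by (rule outer_sum_unitary[OF E U])
  also have "\<dots> = mat_sum m n F {..<n}"
    unfolding F_def using S(1,4) by (intro outer_sum_UN) (auto intro: finite_subset)
  finally have "E = mat_sum m n F {..<n}" .
  moreover have "mrank (F j) \<le> r" for j
    unfolding F_def using mrank_outer_sum_le[OF finite_subset[OF S(1)]] S(2) le_trans by blast
  moreover have "(\<Sum>j<n. frob_norm (F j)) \<le> frob_norm E + nuclear_norm E / sqrt r"
    using sum_S frob[OF S(1)] frob[of "{..<n}"] outer_sum_unitary[OF E U]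
    by (simp add: F_def Q_def nuclear \<sigma>_def)
  ultimately show thesis using that F_def by simp
qed

lemma clinear_op_norm_le_frob_nuclear:
  assumes A: "clinear_op m n p A" and r: "0 < r" and c: "0 \<le> c"
    and low_rank: "\<And>X. X \<in> carrier_mat m n \<Longrightarrow> mrank X \<le> r \<Longrightarrow> vnorm (A X) \<le> c * frob_norm X"
    and E: "E \<in> carrier_mat m n"
  shows "vnorm (A E) \<le> c * (frob_norm E + nuclear_norm E / sqrt r)"
proof -
  obtain F where E_eq: "E = mat_sum m n F {..<n}" and F: "\<And>j. F j \<in> carrier_mat m n"
    "\<And>j. mrank (F j) \<le> r" and frob: "(\<Sum>j<n. frob_norm (F j)) \<le> frob_norm E + nuclear_norm E / sqrt r"
    using low_rank_block_decomposition[OF E r] by blast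
  have "vnorm (A E) \<le> (\<Sum>j<n. vnorm (A (F j)))"
    unfolding E_eq by (rule vnorm_clinear_op_mat_sum_le[OF A]) (simp_all add: F)
  also have "\<dots> \<le> (\<Sum>j<n. c * frob_norm (F j))"
    by (intro sum_mono low_rank F)
  also have "\<dots> \<le> c * (frob_norm E + nuclear_norm E / sqrt r)"
    using mult_left_mono[OF frob c] by (simp add: sum_distrib_left)
  finally show ?thesis .
qed

theorem lemma5:
  fixes m n p r :: nat and A :: "complex mat \<Rightarrow> complex vec"
    and X0 X0r :: "complex mat" and \<nu> b :: "complex vec"
  assumes "r \<ge> 1"
    and "clinear_op m n p A"
    and "rip_const m n A (4 * r) \<le> 0.04"
    and "X0 \<in> carrier_mat m n"
    and "\<nu> \<in> carrier_vec p"
    and "b = A X0 + \<nu>"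
    and "best_rank_approx m n r X0 X0r"
  shows "\<exists>\<nu>' \<in> carrier_vec p. b = A X0r + \<nu>' \<and>
           vnorm \<nu>' \<le> 1.02 * (frob_norm (X0 - X0r) + nuclear_norm (X0 - X0r) / sqrt (real r))
                     + vnorm \<nu>"
proof -
  note r = assms(1) and A = assms(2) and X0 = assms(4) and \<nu> = assms(5)
  txt \<open>Only \<open>X0r \<in> carrier_mat m n\<close> is used: the bound holds for any \<open>m \<times> n\<close> matrix in place of
    the best rank-\<open>r\<close> approximation.\<close>
  have X0r: "X0r \<in> carrier_mat m n" using assms(7) unfolding best_rank_approx_def by blast
  define E where "E = X0 - X0r"
  have E: "E \<in> carrier_mat m n" unfolding E_def by (rule minus_carrier_mat[OF X0r])
  have "X0 = X0r + E" unfolding E_def by (rule eq_matI) (use X0 X0r in auto)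
  then have "A X0 = A X0r + A E" using clinear_opD(2)[OF A X0r E] by simp
  then have b: "b = A X0r + (A E + \<nu>)"
    using assms(6) assoc_add_vec[OF clinear_opD(1)[OF A X0r] clinear_opD(1)[OF A E] \<nu>] by simp
  have low_rank: "vnorm (A X) \<le> 1.02 * frob_norm X" if "X \<in> carrier_mat m n" "mrank X \<le> r" for X
    by (rule rip_const_norm_le[OF A assms(3), where c = "1.02"])
      (use that in \<open>simp_all add: power2_eq_square\<close>)
  have "vnorm (A E) \<le> 1.02 * (frob_norm E + nuclear_norm E / sqrt r)"
    using clinear_op_norm_le_frob_nuclear[OF A _ _ low_rank E] r by simp
  then have "vnorm (A E + \<nu>) \<le> 1.02 * (frob_norm E + nuclear_norm E / sqrt r) + vnorm \<nu>"
    using vnorm_triangle[OF clinear_opD(1)[OF A E] \<nu>] by linarith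
  moreover have "A E + \<nu> \<in> carrier_vec p" using clinear_opD(1)[OF A E] \<nu> by simp
  ultimately show ?thesis
    unfolding E_def[symmetric] using b by (intro bexI[of _ "A E + \<nu>"] conjI)
qed

end
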